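(* Let $\Gamma=(V,E)$ be a graph and $x,y\in V$. If perfect state transfer occurs from $d^*e_x$ to $d^*e_y$ on $\Gamma$, then $\mathrm{Aut}(\Gamma)_x=\mathrm{Aut}(\Gamma)_y$.
   Context: All graphs are finite and simple. $\mathcal{A}$ is the set of symmetric arcs of $\Gamma$, $t((x,y))=y$, $(x,y)^{-1}=(y,x)$. The boundary matrix is $d_{x,a}=\frac{1}{\sqrt{\deg x}}\delta_{x,t(a)}$; $R_{a,b}=\delta_{a,b^{-1}}$; $U=R(2d^*d-I_{\mathcal{A}})$; $e_x$ is the standard unit vector of $\mathbb{C}^V$. Perfect state transfer from $\Phi$ to a distinct state $\Psi$ means $U^\tau\Phi=\gamma\Psi$ for some $\tau\in\mathbb{Z}_{\ge1}$ and $\gamma\in\mathbb{C}$ with $|\gamma|=1$. $\mathrm{Aut}(\Gamma)$ is the automorphism group of $\Gamma$ and $\mathrm{Aut}(\Gamma)_x=\{g\in\mathrm{Aut}(\Gamma)\mid g(x)=x\}$. *)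

theory Defs
  imports Complex_Main
begin

definition simple_graph :: "'a set \<Rightarrow> ('a \<Rightarrow> 'a \<Rightarrow> bool) \<Rightarrow> bool" where
  "simple_graph V E \<longleftrightarrow> finite V \<and> (\<forall>u v. E u v \<longrightarrow> u \<in> V \<and> v \<in> V)
     \<and> (\<forall>u v. E u v \<longrightarrow> E v u) \<and> (\<forall>u. \<not> E u u)"

(* symmetric arcs; an arc a = (x,y) has terminus t(a) = snd a, inverse prod.swap a *)
definition arcs :: "'a set \<Rightarrow> ('a \<Rightarrow> 'a \<Rightarrow> bool) \<Rightarrow> ('a \<times> 'a) set" where
  "arcs V E = {(x, y). x \<in> V \<and> y \<in> V \<and> E x y}"

definition deg :: "'a set \<Rightarrow> ('a \<Rightarrow> 'a \<Rightarrow> bool) \<Rightarrow> 'a \<Rightarrow> nat" where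
  "deg V E x = card {y \<in> V. E x y}"

definition bd :: "'a set \<Rightarrow> ('a \<Rightarrow> 'a \<Rightarrow> bool) \<Rightarrow> 'a \<Rightarrow> 'a \<times> 'a \<Rightarrow> complex" where
  "bd V E x a = (if x = snd a then complex_of_real (1 / sqrt (real (deg V E x))) else 0)"

definition Rmat :: "'a \<times> 'a \<Rightarrow> 'a \<times> 'a \<Rightarrow> complex" where
  "Rmat a b = (if a = prod.swap b then 1 else 0)"

definition dstar_d :: "'a set \<Rightarrow> ('a \<Rightarrow> 'a \<Rightarrow> bool) \<Rightarrow> 'a \<times> 'a \<Rightarrow> 'a \<times> 'a \<Rightarrow> complex" where
  "dstar_d V E a b = (\<Sum>x\<in>V. cnj (bd V E x a) * bd V E x b)"

definition Umat :: "'a set \<Rightarrow> ('a \<Rightarrow> 'a \<Rightarrow> bool) \<Rightarrow> 'a \<times> 'a \<Rightarrow> 'a \<times> 'a \<Rightarrow> complex" where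
  "Umat V E a b = (\<Sum>c\<in>arcs V E. Rmat a c * (2 * dstar_d V E c b - (if c = b then 1 else 0)))"

(* action of U on vectors of C^A (only the entries on arcs are used) *)
definition Uop :: "'a set \<Rightarrow> ('a \<Rightarrow> 'a \<Rightarrow> bool) \<Rightarrow> ('a \<times> 'a \<Rightarrow> complex) \<Rightarrow> ('a \<times> 'a \<Rightarrow> complex)" where
  "Uop V E \<phi> = (\<lambda>a. \<Sum>b\<in>arcs V E. Umat V E a b * \<phi> b)"

definition dstar_e :: "'a set \<Rightarrow> ('a \<Rightarrow> 'a \<Rightarrow> bool) \<Rightarrow> 'a \<Rightarrow> ('a \<times> 'a \<Rightarrow> complex)" where
  "dstar_e V E x = (\<lambda>a. \<Sum>z\<in>V. cnj (bd V E z a) * (if z = x then 1 else 0))"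

definition pst :: "'a set \<Rightarrow> ('a \<Rightarrow> 'a \<Rightarrow> bool) \<Rightarrow> ('a \<times> 'a \<Rightarrow> complex) \<Rightarrow> ('a \<times> 'a \<Rightarrow> complex) \<Rightarrow> bool" where
  "pst V E \<Phi> \<Psi> \<longleftrightarrow> (\<exists>a\<in>arcs V E. \<Phi> a \<noteq> \<Psi> a) \<and>
     (\<exists>\<tau>::nat. \<tau> \<ge> 1 \<and> (\<exists>\<gamma>::complex. cmod \<gamma> = 1 \<and>
        (\<forall>a\<in>arcs V E. ((Uop V E ^^ \<tau>) \<Phi>) a = \<gamma> * \<Psi> a)))"

definition Aut :: "'a set \<Rightarrow> ('a \<Rightarrow> 'a \<Rightarrow> bool) \<Rightarrow> ('a \<Rightarrow> 'a) set" where
  "Aut V E = {g. bij_betw g V V \<and> (\<forall>u\<in>V. \<forall>v\<in>V. E u v \<longleftrightarrow> E (g u) (g v))}"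

definition Aut_stab :: "'a set \<Rightarrow> ('a \<Rightarrow> 'a \<Rightarrow> bool) \<Rightarrow> 'a \<Rightarrow> ('a \<Rightarrow> 'a) set" where
  "Aut_stab V E x = {g \<in> Aut V E. g x = x}"

end

theory Submission
  imports Defs
begin

text \<open>
  The walk operator \<open>U = R (2d\<^sup>*d - I)\<close> is a product of two involutions: the arc reversal \<open>R\<close>
  and the Grover coin, which reflects the values on the arcs entering each vertex about their
  mean. Hence \<open>U\<close> is injective, and it commutes with the action of every automorphism on arcs.
  If \<open>U\<^sup>\<tau> d\<^sup>*e\<^sub>x = \<gamma> d\<^sup>*e\<^sub>y\<close>, an automorphism therefore fixes \<open>d\<^sup>*e\<^sub>x\<close> iff it fixes \<open>d\<^sup>*e\<^sub>y\<close>.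
  Since \<open>d\<^sup>*e\<^sub>z\<close> lives on the arcs entering \<open>z\<close>, it is fixed by \<open>g\<close> exactly when \<open>g z = z\<close>,
  provided it is nonzero, which perfect state transfer guarantees for both states.
\<close>

lemma mem_arcs_iff: "a \<in> arcs V E \<longleftrightarrow> fst a \<in> V \<and> snd a \<in> V \<and> E (fst a) (snd a)"
  unfolding arcs_def by (cases a) auto

lemma finite_arcs: "simple_graph V E \<Longrightarrow> finite (arcs V E)"
  unfolding simple_graph_def arcs_def
  by (rule finite_subset[of _ "V \<times> V"]) auto

lemma swap_mem_arcs: "simple_graph V E \<Longrightarrow> a \<in> arcs V E \<Longrightarrow> prod.swap a \<in> arcs V E"
  unfolding mem_arcs_iff simple_graph_def by (cases a) auto

lemma card_arcs_into:
  assumes "simple_graph V E" and "v \<in> V"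
  shows "card {b \<in> arcs V E. snd b = v} = deg V E v"
proof -
  have "{b \<in> arcs V E. snd b = v} = (\<lambda>u. (u, v)) ` {u \<in> V. E v u}"
    using assms unfolding simple_graph_def mem_arcs_iff by auto
  moreover have "inj_on (\<lambda>u. (u, v)) {u \<in> V. E v u}" by (auto simp: inj_on_def)
  ultimately show ?thesis unfolding deg_def by (simp add: card_image)
qed

definition grover_coin ::
    "'a set \<Rightarrow> ('a \<Rightarrow> 'a \<Rightarrow> bool) \<Rightarrow> ('a \<times> 'a \<Rightarrow> complex) \<Rightarrow> 'a \<times> 'a \<Rightarrow> complex" where
  "grover_coin V E \<phi> a =
     2 / of_nat (deg V E (snd a)) * (\<Sum>b \<in> {b \<in> arcs V E. snd b = snd a}. \<phi> b) - \<phi> a"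

lemma dstar_d_eq:
  assumes "simple_graph V E" and "snd c \<in> V"
  shows "dstar_d V E c b = (if snd b = snd c then 1 / of_nat (deg V E (snd c)) else 0)"
proof -
  have "dstar_d V E c b = (\<Sum>x\<in>V. if x = snd c then cnj (bd V E x c) * bd V E x b else 0)"
    unfolding dstar_d_def by (rule sum.cong) (auto simp: bd_def)
  also have "\<dots> = cnj (bd V E (snd c) c) * bd V E (snd c) b"
    using assms by (simp add: simple_graph_def)
  also have "\<dots> = (if snd b = snd c then 1 / of_nat (deg V E (snd c)) else 0)"
    unfolding bd_def by (simp flip: of_real_mult)
  finally show ?thesis .
qed

lemma Uop_eq_grover_coin_swap:
  assumes g: "simple_graph V E" and a: "a \<in> arcs V E"
  shows "Uop V E \<phi> a = grover_coin V E \<phi> (prod.swap a)"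
proof -
  let ?c = "prod.swap a"
  let ?S = "{b \<in> arcs V E. snd b = snd ?c}"
  have c: "?c \<in> arcs V E" using swap_mem_arcs[OF g a] .
  have fin: "finite (arcs V E)" using finite_arcs[OF g] .
  have U: "Umat V E a b = 2 * dstar_d V E ?c b - (if ?c = b then 1 else 0)" for b
  proof -
    have "Umat V E a b =
        (\<Sum>c\<in>arcs V E. if c = ?c then 2 * dstar_d V E c b - (if c = b then 1 else 0) else 0)"
      unfolding Umat_def Rmat_def by (rule sum.cong) auto
    then show ?thesis using fin c by simp
  qed
  have "Uop V E \<phi> a =
      (\<Sum>b\<in>arcs V E. 2 * (dstar_d V E ?c b * \<phi> b) - (if ?c = b then \<phi> b else 0))"
    unfolding Uop_def U by (rule sum.cong) (auto simp: algebra_simps)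
  also have "\<dots> = 2 * (\<Sum>b\<in>arcs V E. dstar_d V E ?c b * \<phi> b) - \<phi> ?c"
    using fin c by (simp add: sum_subtractf sum_distrib_left)
  also have "(\<Sum>b\<in>arcs V E. dstar_d V E ?c b * \<phi> b) =
      (\<Sum>b\<in>arcs V E. if snd b = snd ?c then 1 / of_nat (deg V E (snd ?c)) * \<phi> b else 0)"
    using c dstar_d_eq[OF g] by (intro sum.cong) (auto simp: mem_arcs_iff)
  also have "\<dots> = (\<Sum>b\<in>?S. 1 / of_nat (deg V E (snd ?c)) * \<phi> b)"
    using fin by (rule sum.inter_filter[symmetric])
  also have "\<dots> = 1 / of_nat (deg V E (snd ?c)) * (\<Sum>b\<in>?S. \<phi> b)"
    by (simp add: sum_distrib_left)
  finally show ?thesis unfolding grover_coin_def by simp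
qed

lemma grover_coin_cong:
  "\<forall>b\<in>arcs V E. \<phi> b = \<psi> b \<Longrightarrow> a \<in> arcs V E \<Longrightarrow> grover_coin V E \<phi> a = grover_coin V E \<psi> a"
  unfolding grover_coin_def by (auto intro!: sum.cong)

lemma Uop_cong: "\<forall>b\<in>arcs V E. \<phi> b = \<psi> b \<Longrightarrow> Uop V E \<phi> a = Uop V E \<psi> a"
  unfolding Uop_def by (auto intro!: sum.cong)

lemma funpow_Uop_cong:
  "\<forall>b\<in>arcs V E. \<phi> b = \<psi> b \<Longrightarrow> a \<in> arcs V E \<Longrightarrow> (Uop V E ^^ n) \<phi> a = (Uop V E ^^ n) \<psi> a"
proof (induction n arbitrary: a)
  case (Suc n)
  then show ?case by (auto intro: Uop_cong)
qed simp

lemma funpow_Uop_zero: "(Uop V E ^^ n) (\<lambda>_. 0) = (\<lambda>_. 0)"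
  by (induction n) (simp_all add: Uop_def)

lemma grover_coin_involutive:
  assumes g: "simple_graph V E" and a: "a \<in> arcs V E"
  shows "grover_coin V E (grover_coin V E \<phi>) a = \<phi> a"
proof -
  let ?S = "{b \<in> arcs V E. snd b = snd a}"
  let ?d = "of_nat (deg V E (snd a)) :: complex"
  have fin: "finite ?S" using finite_arcs[OF g] by simp
  have card: "card ?S = deg V E (snd a)" using card_arcs_into[OF g] a by (simp add: mem_arcs_iff)
  have "a \<in> ?S" using a by simp
  then have "card ?S \<noteq> 0" using fin by (metis card_0_eq empty_iff)
  then have d: "?d \<noteq> 0" using card by simp
  have "(\<Sum>b\<in>?S. grover_coin V E \<phi> b) = (\<Sum>b\<in>?S. 2 / ?d * (\<Sum>c\<in>?S. \<phi> c) - \<phi> b)"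
    unfolding grover_coin_def by (rule sum.cong) auto
  also have "\<dots> = of_nat (card ?S) * (2 / ?d * (\<Sum>c\<in>?S. \<phi> c)) - (\<Sum>c\<in>?S. \<phi> c)"
    by (simp add: sum_subtractf)
  also have "\<dots> = (\<Sum>c\<in>?S. \<phi> c)" using d card by (simp add: field_simps)
  finally have "(\<Sum>b\<in>?S. grover_coin V E \<phi> b) = (\<Sum>c\<in>?S. \<phi> c)" .
  then show ?thesis by (simp add: grover_coin_def[of V E "grover_coin V E \<phi>"] grover_coin_def)
qed

lemma Uop_inj_on_arcs:
  assumes g: "simple_graph V E" and eq: "\<forall>a\<in>arcs V E. Uop V E \<phi> a = Uop V E \<psi> a"
  shows "\<forall>a\<in>arcs V E. \<phi> a = \<psi> a"
proof
  fix a assume a: "a \<in> arcs V E"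
  have coin_eq: "\<forall>b\<in>arcs V E. grover_coin V E \<phi> b = grover_coin V E \<psi> b"
  proof
    fix b assume "b \<in> arcs V E"
    then have "prod.swap b \<in> arcs V E" by (rule swap_mem_arcs[OF g])
    then show "grover_coin V E \<phi> b = grover_coin V E \<psi> b"
      using eq Uop_eq_grover_coin_swap[OF g] by fastforce
  qed
  have "\<phi> a = grover_coin V E (grover_coin V E \<phi>) a" using grover_coin_involutive[OF g a] by simp
  also have "\<dots> = grover_coin V E (grover_coin V E \<psi>) a" using grover_coin_cong[OF coin_eq a] .
  also have "\<dots> = \<psi> a" using grover_coin_involutive[OF g a] .
  finally show "\<phi> a = \<psi> a" .
qed

lemma funpow_Uop_inj_on_arcs:
  assumes g: "simple_graph V E"
  shows "\<forall>a\<in>arcs V E. (Uop V E ^^ n) \<phi> a = (Uop V E ^^ n) \<psi> a \<Longrightarrow> \<forall>a\<in>arcs V E. \<phi> a = \<psi> a"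
proof (induction n arbitrary: \<phi> \<psi>)
  case (Suc n)
  then have "\<forall>a\<in>arcs V E. (Uop V E ^^ n) (Uop V E \<phi>) a = (Uop V E ^^ n) (Uop V E \<psi>) a"
    by (simp only: funpow_Suc_right o_apply)
  then have "\<forall>a\<in>arcs V E. Uop V E \<phi> a = Uop V E \<psi> a" by (rule Suc.IH)
  then show ?case by (rule Uop_inj_on_arcs[OF g])
qed simp

lemma map_prod_mem_arcs: "g \<in> Aut V E \<Longrightarrow> a \<in> arcs V E \<Longrightarrow> map_prod g g a \<in> arcs V E"
  unfolding Aut_def mem_arcs_iff bij_betw_def by (cases a) auto

lemma bij_betw_arcs_into:
  assumes g: "g \<in> Aut V E" and v: "v \<in> V"
  shows "bij_betw (map_prod g g) {b \<in> arcs V E. snd b = v} {b \<in> arcs V E. snd b = g v}"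
proof -
  have bij: "bij_betw g V V" and adj: "\<forall>u\<in>V. \<forall>w\<in>V. E u w \<longleftrightarrow> E (g u) (g w)"
    using g by (auto simp: Aut_def)
  have "inj_on (map_prod g g) {b \<in> arcs V E. snd b = v}"
    using bij unfolding bij_betw_def inj_on_def mem_arcs_iff by (auto simp: prod_eq_iff)
  moreover have "{b \<in> arcs V E. snd b = g v} \<subseteq> map_prod g g ` {b \<in> arcs V E. snd b = v}"
  proof
    fix c assume c: "c \<in> {b \<in> arcs V E. snd b = g v}"
    then obtain u where u: "u \<in> V" "fst c = g u"
      using bij by (auto simp: mem_arcs_iff bij_betw_def)
    then have "(u, v) \<in> {b \<in> arcs V E. snd b = v}" using c adj v by (auto simp: mem_arcs_iff)
    moreover have "c = map_prod g g (u, v)" using c u by (auto simp: prod_eq_iff)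
    ultimately show "c \<in> map_prod g g ` {b \<in> arcs V E. snd b = v}" by blast
  qed
  moreover have "map_prod g g ` {b \<in> arcs V E. snd b = v} \<subseteq> {b \<in> arcs V E. snd b = g v}"
    using map_prod_mem_arcs[OF g] by auto
  ultimately show ?thesis unfolding bij_betw_def by blast
qed

lemma deg_Aut:
  assumes "simple_graph V E" and "g \<in> Aut V E" and "v \<in> V"
  shows "deg V E (g v) = deg V E v"
proof -
  have "g v \<in> V" using assms(2,3) by (auto simp: Aut_def bij_betw_def)
  then show ?thesis
    using bij_betw_same_card[OF bij_betw_arcs_into[OF assms(2,3)]] card_arcs_into[OF assms(1)] assms(3)
    by simp
qed

lemma grover_coin_Aut:
  assumes gr: "simple_graph V E" and g: "g \<in> Aut V E" and a: "a \<in> arcs V E"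
  shows "grover_coin V E (\<phi> \<circ> map_prod g g) a = grover_coin V E \<phi> (map_prod g g a)"
proof -
  have v: "snd a \<in> V" using a by (simp add: mem_arcs_iff)
  have "(\<Sum>b \<in> {b \<in> arcs V E. snd b = snd a}. (\<phi> \<circ> map_prod g g) b) =
      (\<Sum>b \<in> {b \<in> arcs V E. snd b = g (snd a)}. \<phi> b)"
    using sum.reindex_bij_betw[OF bij_betw_arcs_into[OF g v]] by simp
  then show ?thesis unfolding grover_coin_def using deg_Aut[OF gr g v] by (simp add: snd_map_prod)
qed

lemma Uop_Aut:
  assumes gr: "simple_graph V E" and g: "g \<in> Aut V E" and a: "a \<in> arcs V E"
  shows "Uop V E (\<phi> \<circ> map_prod g g) a = Uop V E \<phi> (map_prod g g a)"
proof -
  have "Uop V E (\<phi> \<circ> map_prod g g) a = grover_coin V E (\<phi> \<circ> map_prod g g) (prod.swap a)"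
    using Uop_eq_grover_coin_swap[OF gr a] .
  also have "\<dots> = grover_coin V E \<phi> (map_prod g g (prod.swap a))"
    using grover_coin_Aut[OF gr g swap_mem_arcs[OF gr a]] .
  also have "\<dots> = Uop V E \<phi> (map_prod g g a)"
    using Uop_eq_grover_coin_swap[OF gr map_prod_mem_arcs[OF g a]] by (cases a) simp
  finally show ?thesis .
qed

lemma funpow_Uop_Aut:
  assumes gr: "simple_graph V E" and g: "g \<in> Aut V E" and a: "a \<in> arcs V E"
  shows "(Uop V E ^^ n) (\<phi> \<circ> map_prod g g) a = (Uop V E ^^ n) \<phi> (map_prod g g a)"
  using a
proof (induction n arbitrary: a)
  case (Suc n)
  have "(Uop V E ^^ Suc n) (\<phi> \<circ> map_prod g g) a = Uop V E ((Uop V E ^^ n) (\<phi> \<circ> map_prod g g)) a"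
    by simp
  also have "\<dots> = Uop V E ((Uop V E ^^ n) \<phi> \<circ> map_prod g g) a"
    by (intro Uop_cong ballI) (simp add: Suc.IH)
  also have "\<dots> = (Uop V E ^^ Suc n) \<phi> (map_prod g g a)" using Uop_Aut[OF gr g Suc.prems] by simp
  finally show ?case .
qed simp

lemma Aut_invariant_iff_of_transfer:
  assumes gr: "simple_graph V E" and g: "g \<in> Aut V E" and "\<gamma> \<noteq> 0"
    and transfer: "\<forall>a\<in>arcs V E. (Uop V E ^^ \<tau>) \<Phi> a = \<gamma> * \<Psi> a"
  shows "(\<forall>a\<in>arcs V E. \<Phi> (map_prod g g a) = \<Phi> a) \<longleftrightarrow> (\<forall>a\<in>arcs V E. \<Psi> (map_prod g g a) = \<Psi> a)"
proof -
  have "(Uop V E ^^ \<tau>) (\<Phi> \<circ> map_prod g g) a = \<gamma> * \<Psi> (map_prod g g a)" if "a \<in> arcs V E" for a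
    using funpow_Uop_Aut[OF gr g that] transfer map_prod_mem_arcs[OF g that] by simp
  then have "(\<forall>a\<in>arcs V E. (Uop V E ^^ \<tau>) (\<Phi> \<circ> map_prod g g) a = (Uop V E ^^ \<tau>) \<Phi> a)
      \<longleftrightarrow> (\<forall>a\<in>arcs V E. \<Psi> (map_prod g g a) = \<Psi> a)"
    using transfer \<open>\<gamma> \<noteq> 0\<close> by simp
  moreover have "(\<forall>a\<in>arcs V E. (Uop V E ^^ \<tau>) (\<Phi> \<circ> map_prod g g) a = (Uop V E ^^ \<tau>) \<Phi> a)
      \<longleftrightarrow> (\<forall>a\<in>arcs V E. \<Phi> (map_prod g g a) = \<Phi> a)"
    using funpow_Uop_inj_on_arcs[OF gr] funpow_Uop_cong[of V E "\<Phi> \<circ> map_prod g g" \<Phi>]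
    by (metis comp_apply)
  ultimately show ?thesis by simp
qed

lemma dstar_e_eq:
  assumes "simple_graph V E" and "z \<in> V"
  shows "dstar_e V E z a = (if snd a = z then complex_of_real (1 / sqrt (real (deg V E z))) else 0)"
proof -
  have "dstar_e V E z a = (\<Sum>w\<in>V. if w = z then cnj (bd V E w a) else 0)"
    unfolding dstar_e_def by (rule sum.cong) auto
  also have "\<dots> = cnj (bd V E z a)" using assms by (simp add: simple_graph_def)
  finally show ?thesis unfolding bd_def by auto
qed

lemma dstar_e_Aut_invariant_iff:
  assumes gr: "simple_graph V E" and g: "g \<in> Aut V E" and z: "z \<in> V"
    and nonzero: "\<exists>a\<in>arcs V E. dstar_e V E z a \<noteq> 0"
  shows "(\<forall>a\<in>arcs V E. dstar_e V E z (map_prod g g a) = dstar_e V E z a) \<longleftrightarrow> g z = z"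
proof
  assume inv: "\<forall>a\<in>arcs V E. dstar_e V E z (map_prod g g a) = dstar_e V E z a"
  obtain a where a: "a \<in> arcs V E" "dstar_e V E z a \<noteq> 0" using nonzero by blast
  then have "dstar_e V E z (map_prod g g a) \<noteq> 0" using inv by simp
  then have "g (snd a) = z" using dstar_e_eq[OF gr z] by (auto simp: snd_map_prod split: if_splits)
  moreover have "snd a = z" using a dstar_e_eq[OF gr z] by (auto split: if_splits)
  ultimately show "g z = z" by simp
next
  assume "g z = z"
  moreover have "inj_on g V" using g by (auto simp: Aut_def bij_betw_def)
  ultimately have "g w = z \<longleftrightarrow> w = z" if "w \<in> V" for w
    using z that by (metis inj_on_eq_iff)
  then show "\<forall>a\<in>arcs V E. dstar_e V E z (map_prod g g a) = dstar_e V E z a"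
    using dstar_e_eq[OF gr z] by (auto simp: mem_arcs_iff snd_map_prod)
qed

lemma pst_nonzero:
  assumes gr: "simple_graph V E" and "pst V E \<Phi> \<Psi>"
  shows "\<exists>a\<in>arcs V E. \<Phi> a \<noteq> 0" and "\<exists>a\<in>arcs V E. \<Psi> a \<noteq> 0"
proof -
  obtain \<tau> \<gamma> where distinct: "\<exists>a\<in>arcs V E. \<Phi> a \<noteq> \<Psi> a" and "cmod \<gamma> = 1"
    and transfer: "\<forall>a\<in>arcs V E. (Uop V E ^^ \<tau>) \<Phi> a = \<gamma> * \<Psi> a"
    using assms(2) unfolding pst_def by blast
  then have "\<gamma> \<noteq> 0" by auto
  have "(\<forall>a\<in>arcs V E. \<Phi> a = 0) \<longleftrightarrow> (\<forall>a\<in>arcs V E. \<Psi> a = 0)"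
  proof
    assume "\<forall>a\<in>arcs V E. \<Phi> a = 0"
    then have "\<forall>a\<in>arcs V E. (Uop V E ^^ \<tau>) \<Phi> a = 0"
      using funpow_Uop_cong[of V E \<Phi> "\<lambda>_. 0"] funpow_Uop_zero by metis
    then show "\<forall>a\<in>arcs V E. \<Psi> a = 0" using transfer \<open>\<gamma> \<noteq> 0\<close> by simp
  next
    assume "\<forall>a\<in>arcs V E. \<Psi> a = 0"
    then have "\<forall>a\<in>arcs V E. (Uop V E ^^ \<tau>) \<Phi> a = (Uop V E ^^ \<tau>) (\<lambda>_. 0) a"
      using transfer by (simp add: funpow_Uop_zero)
    then show "\<forall>a\<in>arcs V E. \<Phi> a = 0" using funpow_Uop_inj_on_arcs[OF gr] by blast
  qed
  then show "\<exists>a\<in>arcs V E. \<Phi> a \<noteq> 0" and "\<exists>a\<in>arcs V E. \<Psi> a \<noteq> 0"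
    using distinct by auto
qed

theorem corollary3p4:
  fixes V :: "'a set" and E :: "'a \<Rightarrow> 'a \<Rightarrow> bool" and x y :: 'a
  assumes "simple_graph V E" and "x \<in> V" and "y \<in> V"
    and "pst V E (dstar_e V E x) (dstar_e V E y)"
  shows "Aut_stab V E x = Aut_stab V E y"
proof -
  obtain \<tau> \<gamma> where "cmod \<gamma> = 1"
    and transfer: "\<forall>a\<in>arcs V E. (Uop V E ^^ \<tau>) (dstar_e V E x) a = \<gamma> * dstar_e V E y a"
    using assms(4) unfolding pst_def by blast
  then have "\<gamma> \<noteq> 0" by auto
  have "g x = x \<longleftrightarrow> g y = y" if g: "g \<in> Aut V E" for g
    using Aut_invariant_iff_of_transfer[OF assms(1) g \<open>\<gamma> \<noteq> 0\<close> transfer]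
      dstar_e_Aut_invariant_iff[OF assms(1) g assms(2) pst_nonzero(1)[OF assms(1,4)]]
      dstar_e_Aut_invariant_iff[OF assms(1) g assms(3) pst_nonzero(2)[OF assms(1,4)]]
    by simp
  then show ?thesis unfolding Aut_stab_def by blast
qed

end
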